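(* The circuit graph $G_X(\mathcal{A})$ is a closed subset of $\mathbb{R}^{\mathcal{A}}\times\mathbb{R}$.
   Context: $X\subset\mathbb{R}^n$ is a nonempty closed convex set and $\mathcal{A}\subset\mathbb{R}^n$ is a nonempty finite set such that the functions $x\mapsto\exp(\alpha^Tx)$, $\alpha\in\mathcal{A}$, are linearly independent on $X$. $\mathbb{R}^{\mathcal{A}}$ denotes real vectors indexed by $\mathcal{A}$. $\mathcal{A}\nu=\sum_\alpha\alpha\nu_\alpha$. $\sigma_X(y)=\sup\{y^Tx:x\in X\}$. $N_\beta=\{\nu\in\mathbb{R}^{\mathcal{A}}:\nu_\alpha\ge0\ \forall\alpha\neq\beta,\ \sum_\alpha\nu_\alpha=0\}$. A vector $\nu^\star\in N_\beta$ is an $X$-circuit of $\mathcal{A}$ if (1) $\nu^\star\neq0$, (2) $\sigma_X(-\mathcal{A}\nu^\star)<\infty$, and (3) $\nu^\star$ cannot be written as a convex combination of two non-proportional vectors $\nu^{(1)},\nu^{(2)}\in N_\beta$ such that the map $\nu\mapsto\sigma_X(-\mathcal{A}\nu)$ is affine on the segment $[\nu^{(1)},\nu^{(2)}]$. $\Lambda_X(\mathcal{A})$ is the set of all $X$-circuits $\lambda$ (over all $\beta\in\mathcal{A}$) normalized so that the unique negative entry equals $-1$. The functional form of $\lambda\in\Lambda_X(\mathcal{A})$ is $\phi_\lambda=(\lambda,\sigma_X(-\mathcal{A}\lambda))\in\mathbb{R}^{\mathcal{A}}\times\mathbb{R}$. The circuit graph is $G_X(\mathcal{A})=\operatorname{cone}(\{\phi_\lambda:\lambda\in\Lambda_X(\mathcal{A})\}\cup\{(0,1)\})\subset\mathbb{R}^{\mathcal{A}}\times\mathbb{R}$.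 *)

theory Defs
  imports "HOL-Analysis.Analysis"
begin

text \<open>The finite exponent set A is encoded as an injective indexing
  alpha :: 'm \<Rightarrow> real^'n (A = range alpha), so R^A is real^'m.\<close>

definition Amap :: "('m::finite \<Rightarrow> real^'n) \<Rightarrow> real^'m \<Rightarrow> real^'n" where
  "Amap alpha \<nu> = (\<Sum>i\<in>UNIV. (\<nu> $ i) *\<^sub>R alpha i)"

definition supp_fun :: "(real^'n) set \<Rightarrow> real^'n \<Rightarrow> ereal" where
  "supp_fun X y = (SUP x\<in>X. ereal (y \<bullet> x))"

definition Nset :: "'m::finite \<Rightarrow> (real^'m) set" where
  "Nset \<beta> = {\<nu>. (\<forall>i. i \<noteq> \<beta> \<longrightarrow> \<nu> $ i \<ge> 0) \<and> (\<Sum>i\<in>UNIV. \<nu> $ i) = 0}"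

definition sfun :: "(real^'n) set \<Rightarrow> ('m::finite \<Rightarrow> real^'n) \<Rightarrow> real^'m \<Rightarrow> ereal" where
  "sfun X alpha \<nu> = supp_fun X (- Amap alpha \<nu>)"

definition affine_on_seg :: "(real^'n) set \<Rightarrow> ('m::finite \<Rightarrow> real^'n) \<Rightarrow> real^'m \<Rightarrow> real^'m \<Rightarrow> bool" where
  "affine_on_seg X alpha \<nu>1 \<nu>2 \<longleftrightarrow>
     sfun X alpha \<nu>1 < \<infinity> \<and> sfun X alpha \<nu>2 < \<infinity> \<and>
     (\<forall>t\<in>{0..1::real}. sfun X alpha ((1 - t) *\<^sub>R \<nu>1 + t *\<^sub>R \<nu>2)
        = ereal ((1 - t) * real_of_ereal (sfun X alpha \<nu>1) + t * real_of_ereal (sfun X alpha \<nu>2)))"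

definition proportional :: "real^'m \<Rightarrow> real^'m \<Rightarrow> bool" where
  "proportional u v \<longleftrightarrow> (\<exists>c. u = c *\<^sub>R v) \<or> (\<exists>c. v = c *\<^sub>R u)"

definition is_X_circuit :: "(real^'n) set \<Rightarrow> ('m::finite \<Rightarrow> real^'n) \<Rightarrow> 'm \<Rightarrow> real^'m \<Rightarrow> bool" where
  "is_X_circuit X alpha \<beta> \<nu> \<longleftrightarrow>
     \<nu> \<in> Nset \<beta> \<and> \<nu> \<noteq> 0 \<and> sfun X alpha \<nu> < \<infinity> \<and>
     \<not> (\<exists>\<nu>1 \<nu>2 t. \<nu>1 \<in> Nset \<beta> \<and> \<nu>2 \<in> Nset \<beta> \<and> \<not> proportional \<nu>1 \<nu>2 \<and>
           t \<in> {0<..<1::real} \<and> \<nu> = (1 - t) *\<^sub>R \<nu>1 + t *\<^sub>R \<nu>2 \<and>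
           affine_on_seg X alpha \<nu>1 \<nu>2)"

text \<open>normalized circuits: the unique negative entry (at beta) equals -1\<close>
definition Lambda :: "(real^'n) set \<Rightarrow> ('m::finite \<Rightarrow> real^'n) \<Rightarrow> (real^'m) set" where
  "Lambda X alpha = {l. \<exists>\<beta>. is_X_circuit X alpha \<beta> l \<and> l $ \<beta> = -1}"

definition funform :: "(real^'n) set \<Rightarrow> ('m::finite \<Rightarrow> real^'n) \<Rightarrow> real^'m \<Rightarrow> (real^'m) \<times> real" where
  "funform X alpha l = (l, real_of_ereal (sfun X alpha l))"

definition circuit_graph :: "(real^'n) set \<Rightarrow> ('m::finite \<Rightarrow> real^'n) \<Rightarrow> ((real^'m) \<times> real) set" where
  "circuit_graph X alpha = convex_cone hull (funform X alpha ` Lambda X alpha \<union> {(0, 1)})"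

end

theory Submission
  imports Defs
begin

text \<open>The pairs \<open>(\<nu>, \<tau>)\<close> with \<open>\<nu> \<in> N\<^sub>\<beta>\<close> and \<open>\<sigma>\<^sub>X(-\<A>\<nu>) \<le> \<tau>\<close> form a closed
  convex cone \<open>C\<^sub>\<beta>\<close>. A linear functional \<open>base_fun\<close> that is positive on \<open>C\<^sub>\<beta> - {0}\<close> and
  bounded below by a multiple of \<open>-\<nu>\<^sub>\<beta>\<close> cuts \<open>C\<^sub>\<beta>\<close> in a compact convex base
  \<open>K\<^sub>\<beta>\<close>. An extreme point of \<open>K\<^sub>\<beta>\<close> spans an extreme ray of \<open>C\<^sub>\<beta>\<close>, so it is \<open>(0, 1)\<close> or
  a positive multiple of the functional form of a normalized \<open>X\<close>-circuit; by Krein-Milman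
  \<open>K\<^sub>\<beta> \<subseteq> G\<^sub>X(\<A>)\<close>. Thus \<open>G\<^sub>X(\<A>)\<close> is the convex cone generated by the compact set \<open>\<Union>\<^sub>\<beta> K\<^sub>\<beta>\<close>,
  which lies in the hyperplane \<open>base_fun = 1\<close>, and is therefore closed.

  Since \<open>\<A>\<nu>\<close> may vanish for \<open>\<nu> \<noteq> 0\<close>, \<open>base_fun\<close> cannot depend on \<open>\<A>\<nu>\<close> alone. Linear
  independence of the exponentials yields points of \<open>X\<close> at which any two exponents differ,
  and strict convexity of \<open>exp\<close> at these points bounds the entries of \<open>\<nu>\<close>.\<close>

lemma Amap_add: "Amap alpha (\<mu> + \<nu>) = Amap alpha \<mu> + Amap alpha \<nu>"
  by (simp add: Amap_def scaleR_add_left sum.distrib)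

lemma Amap_scaleR: "Amap alpha (c *\<^sub>R \<nu>) = c *\<^sub>R Amap alpha \<nu>"
  by (simp add: Amap_def scaleR_sum_right)

lemma Amap_zero [simp]: "Amap alpha 0 = 0"
  by (simp add: Amap_def)

lemma Amap_inner: "Amap alpha \<nu> \<bullet> y = (\<Sum>i\<in>UNIV. \<nu> $ i * (alpha i \<bullet> y))"
  by (simp add: Amap_def inner_sum_left)

lemma sfun_le_ereal_iff: "sfun X alpha \<nu> \<le> ereal \<tau> \<longleftrightarrow> (\<forall>x\<in>X. - (Amap alpha \<nu> \<bullet> x) \<le> \<tau>)"
  by (simp add: sfun_def supp_fun_def SUP_le_iff)

lemma sfun_neq_MInfty:
  assumes "X \<noteq> {}" shows "sfun X alpha \<nu> \<noteq> -\<infinity>"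
proof -
  from assms obtain x where "x \<in> X" by blast
  then have "ereal (- Amap alpha \<nu> \<bullet> x) \<le> sfun X alpha \<nu>"
    unfolding sfun_def supp_fun_def by (rule SUP_upper)
  then show ?thesis by auto
qed

lemma sfun_eq_ereal:
  assumes "X \<noteq> {}" "sfun X alpha \<nu> < \<infinity>"
  obtains s where "sfun X alpha \<nu> = ereal s"
  using assms sfun_neq_MInfty[of X alpha \<nu>] by (cases "sfun X alpha \<nu>") auto

lemma sfun_scaleR:
  assumes "X \<noteq> {}" "0 \<le> c"
  shows "sfun X alpha (c *\<^sub>R \<nu>) = ereal c * sfun X alpha \<nu>"
  using assms by (simp add: sfun_def supp_fun_def Sup_ereal_mult_left' Amap_scaleR)

lemma proportional_scaleR_scaleR: "proportional (a *\<^sub>R v) (c *\<^sub>R v)"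
proof (cases "a = 0")
  case False
  then have "c *\<^sub>R v = (c / a) *\<^sub>R (a *\<^sub>R v)" by simp
  then show ?thesis unfolding proportional_def by blast
qed (auto simp: proportional_def)

definition exp_gap :: "real \<Rightarrow> real" where
  "exp_gap t = exp t - 1 - t"

lemma exp_gap_0 [simp]: "exp_gap 0 = 0"
  by (simp add: exp_gap_def)

lemma exp_gap_nonneg: "0 \<le> exp_gap t"
  using exp_ge_add_one_self[of t] unfolding exp_gap_def by linarith

lemma exp_gap_pos:
  assumes "t \<noteq> 0" shows "0 < exp_gap t"
proof (cases "0 \<le> 1 + t / 2")
  case True
  have "(1 + t / 2)\<^sup>2 \<le> (exp (t / 2))\<^sup>2"
    using True exp_ge_add_one_self[of "t / 2"] by (simp add: power_mono)
  also have "\<dots> = exp t"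
    by (simp flip: exp_of_nat_mult)
  finally have "1 + t + t\<^sup>2 / 4 \<le> exp t"
    by (simp add: power2_eq_square algebra_simps)
  moreover have "0 < t\<^sup>2" using assms by simp
  ultimately show ?thesis
    unfolding exp_gap_def by linarith
next
  case False
  then show ?thesis
    using exp_gt_zero[of t] unfolding exp_gap_def by linarith
qed

lemma Nset_nth_nonneg: "\<nu> \<in> Nset b \<Longrightarrow> i \<noteq> b \<Longrightarrow> 0 \<le> \<nu> $ i"
  by (simp add: Nset_def)

lemma Nset_minus_nth_eq_sum:
  assumes "\<nu> \<in> Nset b" shows "- \<nu> $ b = (\<Sum>i\<in>-{b}. \<nu> $ i)"
proof -
  have "(\<Sum>i\<in>UNIV. \<nu> $ i) = 0" using assms by (simp add: Nset_def)
  then show ?thesis by (simp add: sum.remove[of UNIV b] Compl_eq_Diff_UNIV)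
qed

lemma Nset_abs_nth_le:
  assumes "\<nu> \<in> Nset b" shows "\<bar>\<nu> $ i\<bar> \<le> - \<nu> $ b"
proof -
  have "\<nu> $ l \<le> (\<Sum>i\<in>-{b}. \<nu> $ i)" if "l \<noteq> b" for l
    using assms that by (intro member_le_sum) (auto simp: Nset_def)
  moreover have "0 \<le> (\<Sum>i\<in>-{b}. \<nu> $ i)"
    using assms by (intro sum_nonneg) (auto simp: Nset_def)
  ultimately show ?thesis
    using Nset_minus_nth_eq_sum[OF assms] Nset_nth_nonneg[OF assms, of i]
    by (cases "i = b") auto
qed

lemma Nset_nth_neg:
  assumes "\<nu> \<in> Nset b" "\<nu> \<noteq> 0" shows "\<nu> $ b < 0"
proof -
  have "\<nu> $ i = 0" if "\<nu> $ b = 0" for i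
    using Nset_abs_nth_le[OF assms(1), of i] that by simp
  then have "\<nu> $ b \<noteq> 0"
    using assms(2) by (auto simp: vec_eq_iff)
  then show ?thesis
    using Nset_abs_nth_le[OF assms(1), of b] by linarith
qed

lemma Nset_add: "\<mu> \<in> Nset b \<Longrightarrow> \<nu> \<in> Nset b \<Longrightarrow> \<mu> + \<nu> \<in> Nset b"
  by (simp add: Nset_def sum.distrib)

lemma Nset_scaleR: "\<nu> \<in> Nset b \<Longrightarrow> 0 \<le> c \<Longrightarrow> c *\<^sub>R \<nu> \<in> Nset b"
  by (simp add: Nset_def flip: sum_distrib_left)

lemma zero_in_Nset: "0 \<in> Nset b"
  by (simp add: Nset_def)

lemma sum_exp_ge:
  assumes "\<nu> \<in> Nset b"
  shows "exp (a b) * ((\<Sum>l\<in>UNIV. \<nu> $ l * a l) + \<nu> $ i * exp_gap (a i - a b))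
           \<le> (\<Sum>l\<in>UNIV. \<nu> $ l * exp (a l))"
proof -
  have "0 \<le> \<nu> $ l * exp_gap (a l - a b)" for l
    using Nset_nth_nonneg[OF assms, of l] exp_gap_nonneg by (cases "l = b") auto
  then have gap_ge: "\<nu> $ i * exp_gap (a i - a b) \<le> (\<Sum>l\<in>UNIV. \<nu> $ l * exp_gap (a l - a b))"
    by (intro member_le_sum) auto
  have "\<nu> $ l * exp (a l) = exp (a b) * (\<nu> $ l * a l + \<nu> $ l * exp_gap (a l - a b))
                           + exp (a b) * (1 - a b) * \<nu> $ l" for l
    by (simp add: exp_gap_def algebra_simps flip: exp_add)
  then have "(\<Sum>l\<in>UNIV. \<nu> $ l * exp (a l))
      = exp (a b) * ((\<Sum>l\<in>UNIV. \<nu> $ l * a l) + (\<Sum>l\<in>UNIV. \<nu> $ l * exp_gap (a l - a b)))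
        + exp (a b) * (1 - a b) * (\<Sum>l\<in>UNIV. \<nu> $ l)"
    by (simp add: sum.distrib flip: sum_distrib_left)
  also have "(\<Sum>l\<in>UNIV. \<nu> $ l) = 0"
    using assms by (simp add: Nset_def)
  finally show ?thesis
    using gap_ge by simp
qed

lemma extreme_point_of_cone_base_summand:
  fixes C :: "'a::real_vector set" and f :: "'a \<Rightarrow> real"
  assumes C: "convex_cone C" and f: "linear f"
    and pos: "\<And>p. p \<in> C \<Longrightarrow> p \<noteq> 0 \<Longrightarrow> 0 < f p"
    and ext: "e extreme_point_of (C \<inter> {p. f p = 1})"
    and a: "a \<in> C" and c: "c \<in> C" and e: "e = a + c"
  shows "a = f a *\<^sub>R e"
proof -
  interpret f: linear f by (fact f)
  have nonneg: "0 \<le> f p" if "p \<in> C" for p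
    using pos[OF that] by (cases "p = 0") auto
  have sum: "f a + f c = 1"
    using ext e by (simp add: extreme_point_of_def f.add)
  consider "f a = 0" | "f c = 0" | "0 < f a" "0 < f c"
    using nonneg[OF a] nonneg[OF c] by linarith
  then show ?thesis
  proof cases
    case 1
    then show ?thesis using pos[OF a] by auto
  next
    case 2
    then have "c = 0" using pos[OF c] by auto
    then show ?thesis using sum 2 e by simp
  next
    case 3
    define q1 where "q1 = (1 / f a) *\<^sub>R a"
    define q2 where "q2 = (1 / f c) *\<^sub>R c"
    have q: "q1 \<in> C \<inter> {p. f p = 1}" "q2 \<in> C \<inter> {p. f p = 1}"
      using 3 a c C by (auto simp: q1_def q2_def f.scale convex_cone_scaleR)
    have "1 - f c = f a" using sum by simp
    then have e_comb: "e = (1 - f c) *\<^sub>R q1 + f c *\<^sub>R q2"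
      using 3 e by (simp add: q1_def q2_def)
    moreover have "f c < 1" using 3 sum by simp
    ultimately have "q1 \<noteq> q2 \<Longrightarrow> e \<in> open_segment q1 q2"
      using 3 by (auto simp: in_segment)
    then have "q1 = q2"
      using ext q by (auto simp: extreme_point_of_def)
    then have "e = q1"
      using e_comb by (simp flip: scaleR_add_left)
    then show ?thesis
      using 3 by (simp add: q1_def)
  qed
qed

lemma closed_convex_cone_hull_level_set:
  fixes K :: "'a::euclidean_space set" and f :: "'a \<Rightarrow> real"
  assumes "compact K" "linear f" "K \<subseteq> {p. f p = 1}"
  shows "closed (convex_cone hull K)"
proof (cases "K = {}")
  case False
  have "convex {p. f p = 1}"
    using \<open>linear f\<close> by (simp add: convex_def linear_add linear_scale)
  then have "convex hull K \<subseteq> {p. f p = 1}"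
    using assms(3) by (intro hull_minimal)
  then have "0 \<notin> convex hull K"
    using linear_0[OF \<open>linear f\<close>] by auto
  then have "closed (conic hull (convex hull K))"
    using compact_convex_hull[OF \<open>compact K\<close>] by (intro closed_conic_hull) auto
  then show ?thesis
    using convex_cone_hull_separate_nonempty[OF False] by simp
qed simp

locale separating_points =
  fixes X :: "(real^'n) set" and alpha :: "'m::finite \<Rightarrow> real^'n"
    and x0 :: "real^'n" and d :: "'m \<times> 'm \<Rightarrow> real^'n"
  assumes x0_in_X: "x0 \<in> X" and d_in_X: "d j \<in> X"
    and d_separates: "i \<noteq> k \<Longrightarrow> (alpha i - alpha k) \<bullet> (d (i, k) - x0) \<noteq> 0"
begin

definition exp_moment :: "real^'m \<Rightarrow> real" where
  "exp_moment \<nu> = (\<Sum>j\<in>UNIV. \<Sum>l\<in>UNIV. \<nu> $ l * exp (alpha l \<bullet> (d j - x0)))"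

definition W :: real where
  "W = (\<Sum>b\<in>UNIV. \<Sum>j\<in>UNIV. exp (alpha b \<bullet> (d j - x0)))"

text \<open>The \<open>1\<close> only keeps the set nonempty when \<open>'m\<close> is a singleton.\<close>

definition c0 :: real where
  "c0 = Min (insert 1 ((\<lambda>(i, k). exp (alpha k \<bullet> (d (i, k) - x0))
                          * exp_gap ((alpha i - alpha k) \<bullet> (d (i, k) - x0))) ` {(i, k). i \<noteq> k}))"

definition base_fun :: "(real^'m) \<times> real \<Rightarrow> real" where
  "base_fun p = snd p + Amap alpha (fst p) \<bullet> x0 + exp_moment (fst p) / W"

definition epi_cone :: "'m \<Rightarrow> ((real^'m) \<times> real) set" where
  "epi_cone b = {p. fst p \<in> Nset b \<and> sfun X alpha (fst p) \<le> ereal (snd p)}"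

definition epi_base :: "'m \<Rightarrow> ((real^'m) \<times> real) set" where
  "epi_base b = epi_cone b \<inter> {p. base_fun p = 1}"

lemma X_nonempty: "X \<noteq> {}"
  using x0_in_X by auto

lemma W_pos: "0 < W"
  unfolding W_def by (intro sum_pos) auto

lemma c0_pos: "0 < c0"
  unfolding c0_def by (subst Min_gr_iff) (auto intro!: mult_pos_pos exp_gap_pos d_separates)

lemma c0_le:
  "i \<noteq> k \<Longrightarrow> c0 \<le> exp (alpha k \<bullet> (d (i, k) - x0)) * exp_gap ((alpha i - alpha k) \<bullet> (d (i, k) - x0))"
  unfolding c0_def by (rule Min_le) auto

lemma linear_base_fun: "linear base_fun"
  by (rule linearI)
    (simp_all add: base_fun_def exp_moment_def Amap_add Amap_scaleR inner_add_left sum.distrib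
      sum_distrib_left distrib_right add_divide_distrib algebra_simps)

lemma base_fun_zero_fst [simp]: "base_fun (0, t) = t"
  by (simp add: base_fun_def exp_moment_def Amap_def)

lemma mem_epi_cone: "(\<nu>, \<tau>) \<in> epi_cone b \<longleftrightarrow> \<nu> \<in> Nset b \<and> (\<forall>x\<in>X. - (Amap alpha \<nu> \<bullet> x) \<le> \<tau>)"
  by (simp add: epi_cone_def sfun_le_ereal_iff)

lemma convex_cone_epi_cone: "convex_cone (epi_cone b)"
proof -
  have add: "(\<mu> + \<nu>, s + t) \<in> epi_cone b"
    if "(\<mu>, s) \<in> epi_cone b" "(\<nu>, t) \<in> epi_cone b" for \<mu> \<nu> s t
  proof -
    have "- (Amap alpha (\<mu> + \<nu>) \<bullet> x) \<le> s + t" if "x \<in> X" for x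
      using that \<open>(\<mu>, s) \<in> epi_cone b\<close> \<open>(\<nu>, t) \<in> epi_cone b\<close>
      by (fastforce simp: mem_epi_cone Amap_add inner_add_left)
    then show ?thesis
      using that by (simp add: mem_epi_cone Nset_add)
  qed
  have scale: "(c *\<^sub>R \<nu>, c * t) \<in> epi_cone b" if "(\<nu>, t) \<in> epi_cone b" "0 \<le> c" for \<nu> t c
    using that by (auto simp: mem_epi_cone Nset_scaleR Amap_scaleR) (metis mult_left_mono mult_minus_right)
  have "(0, 0) \<in> epi_cone b"
    by (simp add: mem_epi_cone zero_in_Nset Amap_def)
  with add scale show ?thesis
    unfolding convex_cone_iff zero_prod_def by auto
qed

lemma closed_epi_cone: "closed (epi_cone b)"
proof -
  have "epi_cone b = (\<Inter>i\<in>-{b}. {p. 0 \<le> fst p $ i}) \<inter> {p. (\<Sum>i\<in>UNIV. fst p $ i) = 0}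
                     \<inter> (\<Inter>x\<in>X. {p. - (Amap alpha (fst p) \<bullet> x) \<le> snd p})"
    by (auto simp: epi_cone_def sfun_le_ereal_iff Nset_def)
  also have "closed \<dots>"
    unfolding Amap_def
    by (intro closed_Int closed_INT ballI closed_Collect_le closed_Collect_eq continuous_intros)
  finally show ?thesis .
qed

definition gap_sum :: "'m \<Rightarrow> real^'m \<Rightarrow> real" where
  "gap_sum b \<nu> = (\<Sum>j\<in>UNIV. exp (alpha b \<bullet> (d j - x0))
                     * (\<nu> $ fst j * exp_gap ((alpha (fst j) - alpha b) \<bullet> (d j - x0))))"

lemma c0_mult_le_gap_sum:
  assumes N: "\<nu> \<in> Nset b"
  shows "c0 * (- \<nu> $ b) \<le> gap_sum b \<nu>"
proof -
  define g where "g j = exp (alpha b \<bullet> (d j - x0))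
                         * (\<nu> $ fst j * exp_gap ((alpha (fst j) - alpha b) \<bullet> (d j - x0)))" for j
  have g_nonneg: "0 \<le> g j" for j
    using Nset_nth_nonneg[OF N, of "fst j"] exp_gap_nonneg
    by (cases "fst j = b") (auto simp: g_def)
  have "c0 * (- \<nu> $ b) = (\<Sum>i\<in>-{b}. c0 * \<nu> $ i)"
    by (simp add: Nset_minus_nth_eq_sum[OF N] sum_distrib_left)
  also have "\<dots> \<le> (\<Sum>i\<in>-{b}. g (i, b))"
  proof (rule sum_mono)
    fix i assume "i \<in> -{b}"
    then show "c0 * \<nu> $ i \<le> g (i, b)"
      using c0_le[of i b] Nset_nth_nonneg[OF N, of i]
      by (auto simp: g_def mult.left_commute mult.commute[of c0] intro: mult_left_mono)
  qed
  also have "\<dots> = (\<Sum>j\<in>(\<lambda>i. (i, b)) ` (-{b}). g j)"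
    by (simp add: sum.reindex inj_on_def)
  also have "\<dots> \<le> (\<Sum>j\<in>UNIV. g j)"
    by (intro sum_mono2 g_nonneg) auto
  finally show ?thesis
    by (simp add: gap_sum_def g_def)
qed

lemma exp_moment_ge:
  assumes "(\<nu>, \<tau>) \<in> epi_cone b"
  shows "gap_sum b \<nu> - W * (\<tau> + Amap alpha \<nu> \<bullet> x0) \<le> exp_moment \<nu>"
proof -
  have N: "\<nu> \<in> Nset b" and epi: "\<And>x. x \<in> X \<Longrightarrow> - (Amap alpha \<nu> \<bullet> x) \<le> \<tau>"
    using assms by (auto simp: mem_epi_cone)
  define T where "T = \<tau> + Amap alpha \<nu> \<bullet> x0"
  define D where "D j = d j - x0" for j
  have "0 \<le> T"
    using epi[OF x0_in_X] by (simp add: T_def)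
  have term_ge: "- T * exp (alpha b \<bullet> D j)
      + exp (alpha b \<bullet> D j) * (\<nu> $ fst j * exp_gap ((alpha (fst j) - alpha b) \<bullet> D j))
      \<le> (\<Sum>l\<in>UNIV. \<nu> $ l * exp (alpha l \<bullet> D j))" for j
  proof -
    have "- T \<le> Amap alpha \<nu> \<bullet> D j"
      using epi[OF d_in_X[of j]] by (simp add: T_def D_def inner_diff_right)
    then have "- T * exp (alpha b \<bullet> D j) \<le> exp (alpha b \<bullet> D j) * (Amap alpha \<nu> \<bullet> D j)"
      using mult_right_mono[of "- T" _ "exp (alpha b \<bullet> D j)"] by (simp add: mult.commute)
    with sum_exp_ge[OF N, of "\<lambda>l. alpha l \<bullet> D j" "fst j"] show ?thesis
      by (simp add: Amap_inner inner_diff_left distrib_left)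
  qed
  have "(\<Sum>j\<in>UNIV. exp (alpha b \<bullet> D j)) \<le> W"
    unfolding W_def D_def by (rule member_le_sum) (auto intro: sum_nonneg)
  then have "T * (\<Sum>j\<in>UNIV. exp (alpha b \<bullet> D j)) \<le> T * W"
    using \<open>0 \<le> T\<close> by (rule mult_left_mono)
  then have "gap_sum b \<nu> - T * W \<le> - (T * (\<Sum>j\<in>UNIV. exp (alpha b \<bullet> D j))) + gap_sum b \<nu>"
    by linarith
  also have "\<dots> = (\<Sum>j\<in>UNIV. - T * exp (alpha b \<bullet> D j)
      + exp (alpha b \<bullet> D j) * (\<nu> $ fst j * exp_gap ((alpha (fst j) - alpha b) \<bullet> D j)))"
    by (simp add: gap_sum_def D_def sum.distrib sum_distrib_left sum_negf sum_subtractf)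
  also have "\<dots> \<le> exp_moment \<nu>"
    unfolding exp_moment_def D_def[symmetric] by (intro sum_mono term_ge)
  finally show ?thesis
    by (simp add: T_def mult.commute)
qed

lemma base_fun_ge:
  assumes "p \<in> epi_cone b"
  shows "c0 * (- fst p $ b) / W \<le> base_fun p"
proof -
  obtain \<nu> \<tau> where p: "p = (\<nu>, \<tau>)" by fastforce
  have "c0 * (- \<nu> $ b) \<le> gap_sum b \<nu>"
    using assms by (intro c0_mult_le_gap_sum) (simp add: p epi_cone_def)
  moreover have "gap_sum b \<nu> - W * (\<tau> + Amap alpha \<nu> \<bullet> x0) \<le> exp_moment \<nu>"
    using assms by (intro exp_moment_ge) (simp add: p)
  ultimately have "c0 * (- \<nu> $ b) - W * (\<tau> + Amap alpha \<nu> \<bullet> x0) \<le> exp_moment \<nu>"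
    by linarith
  then show ?thesis
    using W_pos by (simp add: base_fun_def p field_simps)
qed

lemma base_fun_pos:
  assumes "p \<in> epi_cone b" "p \<noteq> 0"
  shows "0 < base_fun p"
proof (cases "fst p = 0")
  case True
  then obtain t where p: "p = (0, t)" by (cases p) auto
  have "0 \<le> t"
    using assms(1) x0_in_X by (auto simp: p mem_epi_cone Amap_def)
  moreover have "t \<noteq> 0"
    using assms(2) by (simp add: p zero_prod_def)
  ultimately show ?thesis
    by (simp add: p)
next
  case False
  have "fst p \<in> Nset b"
    using assms(1) by (simp add: epi_cone_def)
  then have "0 < c0 * (- fst p $ b) / W"
    using Nset_nth_neg[OF _ False] c0_pos W_pos by (intro divide_pos_pos mult_pos_pos) auto
  with base_fun_ge[OF assms(1)] show ?thesis
    by linarith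
qed

lemma continuous_on_base_fun: "continuous_on S base_fun"
  unfolding base_fun_def exp_moment_def Amap_def using W_pos by (intro continuous_intros) auto

lemma compact_epi_base: "compact (epi_base b)"
proof -
  define r :: "real^'m" where "r = (\<chi> i. W / c0)"
  define g where "g \<nu> = (\<nu>, 1 - Amap alpha \<nu> \<bullet> x0 - exp_moment \<nu> / W)" for \<nu>
  have "epi_base b \<subseteq> g ` cbox (- r) r"
  proof
    fix p assume "p \<in> epi_base b"
    then have epi: "p \<in> epi_cone b" and base_fun: "base_fun p = 1"
      by (auto simp: epi_base_def)
    have N: "fst p \<in> Nset b"
      using epi by (simp add: epi_cone_def)
    have "- fst p $ b \<le> W / c0"
      using base_fun_ge[OF epi] base_fun c0_pos W_pos by (simp add: field_simps)
    then have "\<bar>fst p $ i\<bar> \<le> W / c0" for i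
      using Nset_abs_nth_le[OF N, of i] by simp
    then have "fst p \<in> cbox (- r) r"
      by (simp add: r_def mem_box_cart abs_le_iff minus_le_iff)
    moreover have "p = g (fst p)"
      using base_fun by (auto simp: g_def base_fun_def prod_eq_iff)
    ultimately show "p \<in> g ` cbox (- r) r"
      by blast
  qed
  moreover have "compact (g ` cbox (- r) r)"
    unfolding g_def exp_moment_def Amap_def
    using W_pos by (intro compact_continuous_image continuous_intros compact_cbox) auto
  moreover have "closed (epi_base b)"
    unfolding epi_base_def
    by (intro closed_Int closed_epi_cone closed_Collect_eq continuous_on_base_fun continuous_intros)
  ultimately show ?thesis
    using compact_Int_closed[of "g ` cbox (- r) r" "epi_base b"] by (simp add: Int_absorb1)
qed

lemma convex_epi_base: "convex (epi_base b)"
proof -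
  have "{p. base_fun p = 1} = base_fun -` {1}" by auto
  then show ?thesis
    unfolding epi_base_def
    using convex_cone_epi_cone convex_linear_vimage[OF linear_base_fun]
    by (auto simp: convex_cone_def intro: convex_Int)
qed

lemma extreme_point_of_epi_base_on_ray:
  assumes "e extreme_point_of epi_base b" "a \<in> epi_cone b" "c \<in> epi_cone b" "e = a + c"
  shows "a = base_fun a *\<^sub>R e"
proof (rule extreme_point_of_cone_base_summand[where C = "epi_cone b"])
  show "convex_cone (epi_cone b)" by (rule convex_cone_epi_cone)
  show "linear base_fun" by (rule linear_base_fun)
  show "\<And>p. p \<in> epi_cone b \<Longrightarrow> p \<noteq> 0 \<Longrightarrow> 0 < base_fun p" by (rule base_fun_pos)
qed (use assms in \<open>simp_all add: epi_base_def\<close>)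

lemma extreme_point_of_epi_base_tight:
  assumes ext: "e extreme_point_of epi_base b" and "fst e \<noteq> 0"
  shows "sfun X alpha (fst e) = ereal (snd e)"
proof -
  obtain \<nu> \<tau> where e: "e = (\<nu>, \<tau>)" by fastforce
  have N: "\<nu> \<in> Nset b" and \<sigma>_le: "sfun X alpha \<nu> \<le> ereal \<tau>"
    using ext by (auto simp: e extreme_point_of_def epi_base_def epi_cone_def)
  have "sfun X alpha \<nu> < \<infinity>"
    using \<sigma>_le by (cases "sfun X alpha \<nu>") auto
  then obtain \<sigma> where \<sigma>: "sfun X alpha \<nu> = ereal \<sigma>"
    by (rule sfun_eq_ereal[OF X_nonempty])
  have "(0, \<tau> - \<sigma>) \<in> epi_cone b"
    using \<sigma>_le \<sigma> by (simp add: mem_epi_cone zero_in_Nset)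
  moreover have "(\<nu>, \<sigma>) \<in> epi_cone b"
    using N \<sigma> by (simp add: epi_cone_def)
  ultimately have "(0, \<tau> - \<sigma>) = base_fun (0, \<tau> - \<sigma>) *\<^sub>R e"
    by (rule extreme_point_of_epi_base_on_ray[OF ext]) (simp add: e)
  from arg_cong[OF this, of fst] have "(\<tau> - \<sigma>) *\<^sub>R \<nu> = 0"
    by (simp add: e)
  then have "\<tau> = \<sigma>"
    using assms(2) by (simp add: e)
  then show ?thesis
    by (simp add: e \<sigma>)
qed

lemma extreme_point_of_epi_base_split_proportional:
  assumes ext: "e extreme_point_of epi_base b"
    and "0 < m" "0 < t" "t < 1" "\<nu>1 \<in> Nset b" "\<nu>2 \<in> Nset b"
    and s: "sfun X alpha \<nu>1 = ereal s1" "sfun X alpha \<nu>2 = ereal s2"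
    and e: "e = m *\<^sub>R ((1 - t) *\<^sub>R \<nu>1 + t *\<^sub>R \<nu>2, (1 - t) * s1 + t * s2)"
  shows "proportional \<nu>1 \<nu>2"
proof -
  define a where "a = (m * (1 - t)) *\<^sub>R (\<nu>1, s1)"
  define c where "c = (m * t) *\<^sub>R (\<nu>2, s2)"
  have "(\<nu>1, s1) \<in> epi_cone b" "(\<nu>2, s2) \<in> epi_cone b"
    using assms(5,6) s by (simp_all add: epi_cone_def)
  then have ac: "a \<in> epi_cone b" "c \<in> epi_cone b"
    unfolding a_def c_def using assms(2-4)
    by (auto intro: convex_cone_scaleR[OF convex_cone_epi_cone] simp del: scaleR_Pair)
  have "e = a + c" "e = c + a"
    by (simp_all add: e a_def c_def algebra_simps)
  then have "a = base_fun a *\<^sub>R e" "c = base_fun c *\<^sub>R e"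
    using extreme_point_of_epi_base_on_ray[OF ext] ac by blast+
  then have "fst a = base_fun a *\<^sub>R fst e" "fst c = base_fun c *\<^sub>R fst e"
    by (metis fst_scaleR)+
  then have "(m * (1 - t)) *\<^sub>R \<nu>1 = base_fun a *\<^sub>R fst e" "(m * t) *\<^sub>R \<nu>2 = base_fun c *\<^sub>R fst e"
    by (simp_all add: a_def c_def)
  then have "\<nu>1 = (base_fun a / (m * (1 - t))) *\<^sub>R fst e" "\<nu>2 = (base_fun c / (m * t)) *\<^sub>R fst e"
    using assms(2-4) by (simp_all add: eq_vector_fraction_iff)
  then show ?thesis
    using proportional_scaleR_scaleR by metis
qed

lemma extreme_point_of_epi_base_circuit:
  assumes ext: "e extreme_point_of epi_base b"
    and "fst e \<noteq> 0" "0 < m" "fst e = m *\<^sub>R l"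
  shows "is_X_circuit X alpha b l"
proof -
  obtain \<nu> \<tau> where e: "e = (\<nu>, \<tau>)" by fastforce
  have \<sigma>: "sfun X alpha \<nu> = ereal \<tau>"
    using extreme_point_of_epi_base_tight[OF assms(1,2)] by (simp add: e)
  have \<nu>: "\<nu> = m *\<^sub>R l"
    using assms(4) by (simp add: e)
  have "\<nu> \<in> Nset b"
    using ext by (auto simp: e extreme_point_of_def epi_base_def epi_cone_def)
  then have "l \<in> Nset b"
    using \<open>0 < m\<close> Nset_scaleR[of \<nu> b "1 / m"] by (simp add: \<nu>)
  have "l \<noteq> 0"
    using assms(2) by (simp add: e \<nu>)
  have "l = (1 / m) *\<^sub>R \<nu>"
    using \<open>0 < m\<close> by (simp add: \<nu>)
  then have \<sigma>_l: "sfun X alpha l = ereal (\<tau> / m)"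
    using \<open>0 < m\<close> by (simp add: sfun_scaleR[OF X_nonempty] \<sigma>)
  show ?thesis
    unfolding is_X_circuit_def
  proof (intro conjI \<open>l \<in> Nset b\<close> \<open>l \<noteq> 0\<close> notI)
    show "sfun X alpha l < \<infinity>" using \<sigma>_l by simp
    assume "\<exists>\<nu>1 \<nu>2 t. \<nu>1 \<in> Nset b \<and> \<nu>2 \<in> Nset b \<and> \<not> proportional \<nu>1 \<nu>2 \<and>
        t \<in> {0<..<1} \<and> l = (1 - t) *\<^sub>R \<nu>1 + t *\<^sub>R \<nu>2 \<and> affine_on_seg X alpha \<nu>1 \<nu>2"
    then obtain \<nu>1 \<nu>2 t where N12: "\<nu>1 \<in> Nset b" "\<nu>2 \<in> Nset b"
      and not_prop: "\<not> proportional \<nu>1 \<nu>2" and t: "0 < t" "t < 1"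
      and l: "l = (1 - t) *\<^sub>R \<nu>1 + t *\<^sub>R \<nu>2" and aff: "affine_on_seg X alpha \<nu>1 \<nu>2"
      by auto
    obtain s1 s2 where s: "sfun X alpha \<nu>1 = ereal s1" "sfun X alpha \<nu>2 = ereal s2"
      using aff sfun_eq_ereal[OF X_nonempty] by (metis affine_on_seg_def)
    have "sfun X alpha l = ereal ((1 - t) * s1 + t * s2)"
      using aff t by (simp add: affine_on_seg_def l s)
    then have "\<tau> = m * ((1 - t) * s1 + t * s2)"
      using \<sigma>_l \<open>0 < m\<close> by (simp add: field_simps)
    then have "e = m *\<^sub>R ((1 - t) *\<^sub>R \<nu>1 + t *\<^sub>R \<nu>2, (1 - t) * s1 + t * s2)"
      by (simp add: e \<nu> l)
    with not_prop show False
      using extreme_point_of_epi_base_split_proportional[OF ext \<open>0 < m\<close> t N12 s] by blast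
  qed
qed

lemma extreme_point_of_epi_base_in_circuit_graph:
  assumes ext: "e extreme_point_of epi_base b"
  shows "e \<in> circuit_graph X alpha"
proof (cases "fst e = 0")
  case True
  then have "e = (0, 1)"
    using ext by (cases e) (simp add: extreme_point_of_def epi_base_def)
  then show ?thesis
    unfolding circuit_graph_def by (intro hull_inc) auto
next
  case False
  have "fst e \<in> Nset b"
    using ext by (simp add: extreme_point_of_def epi_base_def epi_cone_def)
  define m where "m = - fst e $ b"
  define l where "l = (1 / m) *\<^sub>R fst e"
  have "0 < m"
    using Nset_nth_neg[OF \<open>fst e \<in> Nset b\<close> False] by (simp add: m_def)
  then have l: "fst e = m *\<^sub>R l" "l $ b = -1"
    by (simp_all add: l_def m_def)
  then have "l \<in> Lambda X alpha"
    using extreme_point_of_epi_base_circuit[OF ext False \<open>0 < m\<close>] by (auto simp: Lambda_def)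
  then have "funform X alpha l \<in> circuit_graph X alpha"
    unfolding circuit_graph_def by (intro hull_inc) auto
  moreover have "sfun X alpha l = ereal (snd e / m)"
    using extreme_point_of_epi_base_tight[OF ext False] \<open>0 < m\<close>
    by (simp add: l_def sfun_scaleR[OF X_nonempty])
  then have "e = m *\<^sub>R funform X alpha l"
    using \<open>0 < m\<close> l(1) by (cases e) (simp add: funform_def)
  moreover have "conic (circuit_graph X alpha)"
    unfolding circuit_graph_def by (rule conic_convex_cone_hull)
  ultimately show ?thesis
    using \<open>0 < m\<close> by (simp add: conic_mul)
qed

lemma epi_base_subset_circuit_graph: "epi_base b \<subseteq> circuit_graph X alpha"
proof -
  have "convex (circuit_graph X alpha)"
    unfolding circuit_graph_def by (rule convex_convex_cone_hull)
  then have "convex hull {e. e extreme_point_of epi_base b} \<subseteq> circuit_graph X alpha"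
    using extreme_point_of_epi_base_in_circuit_graph by (intro hull_minimal) auto
  then show ?thesis
    using Krein_Milman_Minkowski[OF compact_epi_base convex_epi_base] by simp
qed

lemma circuit_graph_eq_convex_cone_hull_epi_base:
  "circuit_graph X alpha = convex_cone hull (\<Union>b. epi_base b)"
proof
  show "convex_cone hull (\<Union>b. epi_base b) \<subseteq> circuit_graph X alpha"
    using epi_base_subset_circuit_graph unfolding circuit_graph_def
    by (intro hull_minimal convex_cone_convex_cone_hull) auto
next
  have in_hull: "p \<in> convex_cone hull (\<Union>b. epi_base b)" if "p \<in> epi_cone b" for p b
  proof (cases "p = 0")
    case False
    then have "0 < base_fun p"
      using base_fun_pos[OF that] by simp
    then have "(1 / base_fun p) *\<^sub>R p \<in> epi_base b"
      using that linear_base_fun convex_cone_epi_cone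
      by (simp add: epi_base_def linear_cmul convex_cone_scaleR)
    then have "base_fun p *\<^sub>R ((1 / base_fun p) *\<^sub>R p) \<in> convex_cone hull (\<Union>b. epi_base b)"
      using \<open>0 < base_fun p\<close> by (intro convex_cone_hull_mul hull_inc) auto
    then show ?thesis
      using \<open>0 < base_fun p\<close> by simp
  qed (simp add: convex_cone_hull_contains_0)
  have "funform X alpha l \<in> epi_cone b" if "is_X_circuit X alpha b l" for l b
  proof -
    have "sfun X alpha l < \<infinity>"
      using that by (simp add: is_X_circuit_def)
    then obtain s where "sfun X alpha l = ereal s"
      by (rule sfun_eq_ereal[OF X_nonempty])
    then show ?thesis
      using that by (simp add: is_X_circuit_def funform_def epi_cone_def)
  qed
  then have "funform X alpha ` Lambda X alpha \<subseteq> convex_cone hull (\<Union>b. epi_base b)"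
    unfolding Lambda_def using in_hull by blast
  moreover have "((0::real^'m), 1::real) \<in> epi_cone b" for b
    by (simp add: mem_epi_cone zero_in_Nset)
  ultimately have "funform X alpha ` Lambda X alpha \<union> {(0, 1)} \<subseteq> convex_cone hull (\<Union>b. epi_base b)"
    using in_hull by blast
  then show "circuit_graph X alpha \<subseteq> convex_cone hull (\<Union>b. epi_base b)"
    unfolding circuit_graph_def by (intro hull_minimal convex_cone_convex_cone_hull)
qed

lemma closed_circuit_graph: "closed (circuit_graph X alpha)"
proof -
  have "compact (\<Union>b. epi_base b)"
    by (simp add: compact_UN compact_epi_base)
  then show ?thesis
    unfolding circuit_graph_eq_convex_cone_hull_epi_base
    by (rule closed_convex_cone_hull_level_set[OF _ linear_base_fun]) (auto simp: epi_base_def)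
qed

end

lemma exists_separating_point:
  fixes alpha :: "'m::finite \<Rightarrow> real^'n"
  assumes indep: "\<And>c. (\<forall>x\<in>X. (\<Sum>i\<in>UNIV. c i * exp (alpha i \<bullet> x)) = 0) \<Longrightarrow> (\<forall>i. c i = 0)"
    and "x0 \<in> X" "i \<noteq> k"
  shows "\<exists>y\<in>X. (alpha i - alpha k) \<bullet> (y - x0) \<noteq> 0"
proof (rule ccontr)
  assume "\<not> ?thesis"
  then have same: "alpha i \<bullet> x = alpha k \<bullet> x + (alpha i - alpha k) \<bullet> x0" if "x \<in> X" for x
    using that by (auto simp: inner_diff_left inner_diff_right algebra_simps)
  define c where "c l = (if l = i then 1 else if l = k then - exp ((alpha i - alpha k) \<bullet> x0) else 0)"
    for l
  have "(\<Sum>l\<in>UNIV. c l * exp (alpha l \<bullet> x)) = 0" if "x \<in> X" for x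
  proof -
    have "(\<Sum>l\<in>UNIV. c l * exp (alpha l \<bullet> x)) = (\<Sum>l\<in>{i, k}. c l * exp (alpha l \<bullet> x))"
      by (rule sum.mono_neutral_right) (auto simp: c_def)
    also have "\<dots> = 0"
      using \<open>i \<noteq> k\<close> same[OF that] by (simp add: c_def exp_add add.commute)
    finally show ?thesis .
  qed
  then have "c i = 0"
    using indep by blast
  then show False
    by (simp add: c_def)
qed

theorem lemma5p11:
  fixes X :: "(real^'n) set" and alpha :: "'m::finite \<Rightarrow> real^'n"
  assumes "X \<noteq> {}" and "closed X" and "convex X"
    and "inj alpha"
    and "\<And>c. (\<forall>x\<in>X. (\<Sum>i\<in>UNIV. c i * exp (alpha i \<bullet> x)) = 0) \<Longrightarrow> (\<forall>i. c i = 0)"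
  shows "closed (circuit_graph X alpha)"
proof -
  obtain x0 where x0: "x0 \<in> X"
    using assms(1) by blast
  have "\<forall>j. \<exists>y. y \<in> X \<and> (fst j \<noteq> snd j \<longrightarrow> (alpha (fst j) - alpha (snd j)) \<bullet> (y - x0) \<noteq> 0)"
    using exists_separating_point[OF assms(5) x0] x0 by blast
  then obtain d where d: "\<forall>j. d j \<in> X \<and> (fst j \<noteq> snd j \<longrightarrow> (alpha (fst j) - alpha (snd j)) \<bullet> (d j - x0) \<noteq> 0)"
    using choice[of "\<lambda>j y. y \<in> X \<and> (fst j \<noteq> snd j \<longrightarrow> (alpha (fst j) - alpha (snd j)) \<bullet> (y - x0) \<noteq> 0)"]
    by blast
  interpret separating_points X alpha x0 d
    using x0 d by unfold_locales auto
  show ?thesis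
    by (rule closed_circuit_graph)
qed

end
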